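(* Let $A,B\in\mathbb{C}^{m\times m}$ with $A$ nonsingular, and $M=ABA^{-1}$. (f) The following are equivalent: $\{M^{(1,3,4)}\}\cap\{AB^{(1,3,4)}A^{-1}\}\neq\emptyset$; $\{M^{(1,3,4)}\}=\{AB^{(1,3,4)}A^{-1}\}$; $AB^\dagger A^{-1}\in\{M^{(1,3,4)}\}$; $M^\dagger\in\{AB^{(1,3,4)}A^{-1}\}$; $M^\dagger=AB^\dagger A^{-1}$; $\mathscr{R}(A^*AB)=\mathscr{R}(B)$ and $\mathscr{R}(A^*AB^* )=\mathscr{R}(B^* )$. (g) If moreover $A^*A=I_m$, then $\{(ABA^* )^{(\tau)}\}=\{AB^{(\tau)}A^*\}$ for each of the types $\tau=(1),(1,2),(1,3),(1,4),(1,2,3),(1,2,4),(1,3,4)$, and $(ABA^* )^\dagger=AB^\dagger A^*$.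
   Context: For a complex matrix $X$, $X^*$ is its conjugate transpose and $\mathscr{R}(X)$ its column space. For $X\in\mathbb{C}^{p\times q}$, a matrix $G\in\mathbb{C}^{q\times p}$ is called an $\{i,\ldots,j\}$-generalized inverse of $X$ (written $X^{(i,\ldots,j)}$) if it satisfies the equations numbered $i,\ldots,j$ among the four Penrose equations (i) $XGX=X$, (ii) $GXG=G$, (iii) $(XG)^*=XG$, (iv) $(GX)^*=GX$; $\{X^{(i,\ldots,j)}\}$ denotes the set of all such $G$. The Moore–Penrose inverse $X^\dagger$ is the unique matrix satisfying all four equations. $\{AB^{(\tau)}A^{-1}\}:=\{AGA^{-1}:G\in\{B^{(\tau)}\}\}$, and similarly with $A^*$ in place of $A^{-1}$. *)

theory Defs
  imports "HOL-Analysis.Analysis"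
begin

definition cadj :: "complex^'n^'m \<Rightarrow> complex^'m^'n" where
  "cadj X = (\<chi> i j. cnj (X $ j $ i))"

definition colspace :: "complex^'n^'m \<Rightarrow> (complex^'m) set" where
  "colspace X = range (\<lambda>v. X *v v)"

definition penrose :: "nat set \<Rightarrow> complex^'n^'m \<Rightarrow> complex^'m^'n \<Rightarrow> bool" where
  "penrose S X G \<longleftrightarrow>
     (1 \<in> S \<longrightarrow> X ** G ** X = X) \<and>
     (2 \<in> S \<longrightarrow> G ** X ** G = G) \<and>
     (3 \<in> S \<longrightarrow> cadj (X ** G) = X ** G) \<and>
     (4 \<in> S \<longrightarrow> cadj (G ** X) = G ** X)"

definition ginvs :: "nat set \<Rightarrow> complex^'n^'m \<Rightarrow> (complex^'m^'n) set" where
  "ginvs S X = {G. penrose S X G}"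

definition mpinv :: "complex^'n^'m \<Rightarrow> complex^'m^'n" where
  "mpinv X = (THE G. penrose {1,2,3,4} X G)"

end

theory Submission
  imports Defs
begin

text \<open>Both \<open>M{1,3,4}\<close> and \<open>A B{1,3,4} A\<^sup>-\<^sup>1\<close> are fibres of the map \<open>H \<mapsto> (M H, H M)\<close>:
  the first over \<open>(M M\<^sup>+, M\<^sup>+ M)\<close>, the second over \<open>(A B B\<^sup>+ A\<^sup>-\<^sup>1, A B\<^sup>+ B A\<^sup>-\<^sup>1)\<close>.
  So they meet iff they coincide iff the two pairs agree, and this also characterises
  \<open>M\<^sup>+ = A B\<^sup>+ A\<^sup>-\<^sup>1\<close>. As \<open>A B\<^sup>+ A\<^sup>-\<^sup>1\<close> is a \<open>{1}\<close>-inverse of \<open>M\<close>, the identity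
  \<open>M M\<^sup>+ = A B B\<^sup>+ A\<^sup>-\<^sup>1\<close> holds iff the right-hand side is Hermitian, i.e.\ iff the
  orthogonal projector \<open>B B\<^sup>+\<close> commutes with \<open>A\<^sup>* A\<close>, i.e.\ iff the column space of \<open>B\<close> is
  \<open>A\<^sup>* A\<close>-invariant; dually for \<open>B\<^sup>+ B\<close> and \<open>B\<^sup>*\<close>. For unitary \<open>A\<close> the similarity
  preserves every Penrose equation.\<close>

lemma cadj_mult: "cadj (X ** Y) = cadj Y ** cadj X"
  by (simp add: cadj_def matrix_matrix_mult_def vec_eq_iff mult.commute)

lemma cadj_cadj [simp]: "cadj (cadj X) = X"
  by (simp add: cadj_def vec_eq_iff)

lemma cadj_mat_1 [simp]: "cadj (mat 1 :: complex^'n^'n) = mat 1"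
  by (simp add: cadj_def mat_def vec_eq_iff)

lemma cadj_diff: "cadj (X - Y) = cadj X - cadj Y"
  by (simp add: cadj_def vec_eq_iff)

lemma matrix_diff_ldistrib: "(A::'a::ring_1^'n^'m) ** (B - C) = A ** B - A ** C"
  by (simp add: matrix_matrix_mult_def vec_eq_iff sum_subtractf algebra_simps)

lemma matrix_diff_rdistrib: "((A::'a::ring_1^'n^'m) - B) ** C = A ** C - B ** C"
  by (simp add: matrix_matrix_mult_def vec_eq_iff sum_subtractf algebra_simps)

text \<open>The diagonal entries of \<open>E\<^sup>* E\<close> are the squared norms of the columns of \<open>E\<close>.\<close>
lemma cadj_mult_self_eq_0:
  fixes E :: "complex^'n^'m"
  assumes "cadj E ** E = 0"
  shows "E = 0"
proof -
  have "E $ k $ i = 0" for k i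
  proof -
    have "(\<Sum>k\<in>UNIV. cnj (E$k$i) * E$k$i) = 0"
      using assms by (simp add: matrix_matrix_mult_def cadj_def vec_eq_iff)
    hence "(\<Sum>k\<in>UNIV. complex_of_real ((norm (E$k$i))\<^sup>2)) = 0"
      by (simp only: complex_norm_square) (simp add: mult.commute)
    hence "(\<Sum>k\<in>UNIV. (norm (E$k$i))\<^sup>2) = 0"
      by (metis of_real_eq_0_iff of_real_sum)
    hence "(norm (E$k$i))\<^sup>2 = 0"
      by (subst (asm) sum_nonneg_eq_0_iff) auto
    thus ?thesis by simp
  qed
  thus ?thesis by (simp add: vec_eq_iff)
qed

section \<open>Existence and uniqueness of the Moore--Penrose inverse\<close>

lemma exists_ginv_1:
  fixes X :: "complex^'n^'m"
  shows "\<exists>G. X ** G ** X = X"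
proof -
  obtain g where g: "Vector_Spaces.linear (*s) (*s) g" "\<forall>v\<in>range ((*v) X). X *v g v = v"
    using vec.linear_exists_right_inverse_on[OF matrix_vector_mul_linear_gen vec.subspace_UNIV, of X]
    by auto
  have "(X ** matrix g ** X) *v x = X *v x" for x
    using g by (simp add: matrix_vector_mul_assoc[symmetric] matrix_works)
  thus ?thesis by (auto simp: matrix_eq)
qed

text \<open>If \<open>T\<close> is a \<open>{1}\<close>-inverse of \<open>X\<^sup>* X\<close>, then \<open>T X\<^sup>*\<close> is a \<open>{1,3}\<close>-inverse of \<open>X\<close>;
  the key identity \<open>X T X\<^sup>* X = X\<close> follows from \<open>E\<^sup>* E = 0\<close> for \<open>E = X T X\<^sup>* X - X\<close>.\<close>
lemma exists_ginv_13:
  fixes X :: "complex^'n^'m"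
  shows "\<exists>G. X ** G ** X = X \<and> cadj (X ** G) = X ** G"
proof -
  define S where "S = cadj X ** X"
  obtain T where T: "S ** T ** S = S" using exists_ginv_1 by blast
  have cadj_S: "cadj S = S" by (simp add: S_def cadj_mult)
  define E where "E = X ** T ** S - X"
  have XE: "cadj X ** E = 0"
    using T by (simp add: E_def matrix_diff_ldistrib S_def matrix_mul_assoc)
  have "cadj E ** E = cadj S ** cadj T ** (cadj X ** E) - cadj X ** E"
    by (simp add: E_def cadj_diff cadj_mult matrix_diff_rdistrib matrix_mul_assoc)
  hence "E = 0" using XE cadj_mult_self_eq_0 by simp
  hence XTS: "X ** T ** S = X" by (simp add: E_def)
  have "cadj X = S ** cadj T ** cadj X"
    using arg_cong[OF XTS, of cadj] by (simp add: cadj_mult cadj_S matrix_mul_assoc)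
  hence "X ** (T ** cadj X) = (X ** T ** S) ** cadj T ** cadj X"
    by (metis matrix_mul_assoc)
  also have "\<dots> = cadj (X ** (T ** cadj X))"
    using XTS by (simp add: cadj_mult matrix_mul_assoc)
  finally show ?thesis
    using XTS by (metis S_def matrix_mul_assoc)
qed

lemma exists_ginv_14:
  fixes X :: "complex^'n^'m"
  shows "\<exists>G. X ** G ** X = X \<and> cadj (G ** X) = G ** X"
proof -
  obtain K where K: "cadj X ** K ** cadj X = cadj X" "cadj (cadj X ** K) = cadj X ** K"
    using exists_ginv_13[of "cadj X"] by blast
  have "X ** cadj K ** X = X"
    using arg_cong[OF K(1), of cadj] by (simp add: cadj_mult matrix_mul_assoc)
  moreover have "cadj (cadj K ** X) = cadj K ** X"
    using K(2) by (metis cadj_cadj cadj_mult)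
  ultimately show ?thesis by blast
qed

lemma exists_penrose_1234:
  fixes X :: "complex^'n^'m"
  shows "\<exists>G. penrose {1,2,3,4} X G"
proof -
  obtain G3 where G3: "X ** G3 ** X = X" "cadj (X ** G3) = X ** G3"
    using exists_ginv_13 by blast
  obtain G4 where G4: "X ** G4 ** X = X" "cadj (G4 ** X) = G4 ** X"
    using exists_ginv_14 by blast
  define G where "G = G4 ** X ** G3"
  have "X ** G = X ** G3" "G ** X = G4 ** X"
    unfolding G_def by (metis G3(1) G4(1) matrix_mul_assoc)+
  moreover have "X ** G ** X = X" "G ** X ** G = G"
    unfolding G_def by (metis G3(1) G4(1) matrix_mul_assoc)+
  ultimately show ?thesis
    using G3(2) G4(2) unfolding penrose_def by metis
qed

lemma penrose_1234_unique:
  fixes X :: "complex^'n^'m"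
  assumes G: "penrose {1,2,3,4} X G" and H: "penrose {1,2,3,4} X H"
  shows "G = H"
proof -
  have G1: "X ** G ** X = X" and G2: "G ** X ** G = G" and G3: "cadj (X ** G) = X ** G"
    and G4: "cadj (G ** X) = G ** X" using G by (auto simp: penrose_def)
  have H1: "X ** H ** X = X" and H2: "H ** X ** H = H" and H3: "cadj (X ** H) = X ** H"
    and H4: "cadj (H ** X) = H ** X" using H by (auto simp: penrose_def)
  have "G = G ** cadj G ** cadj (X ** H ** X)"
    using G2 G3 H1 by (metis cadj_mult matrix_mul_assoc)
  also have "\<dots> = G ** (cadj (X ** G) ** cadj (X ** H))"
    by (simp add: cadj_mult matrix_mul_assoc)
  also have "\<dots> = G ** X ** H"
    using G1 G3 H3 by (metis matrix_mul_assoc)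
  finally have "G = G ** X ** H" .
  moreover have "H = cadj (X ** G ** X) ** cadj H ** H"
    using H2 H4 G1 by (metis cadj_mult)
  moreover have "\<dots> = (cadj (G ** X) ** cadj (H ** X)) ** H"
    by (simp add: cadj_mult matrix_mul_assoc)
  moreover have "\<dots> = G ** X ** H"
    using G4 H1 H4 by (metis matrix_mul_assoc)
  ultimately show ?thesis by simp
qed

lemma mpinv_penrose: "penrose {1,2,3,4} X (mpinv X)"
  unfolding mpinv_def by (rule theI') (use exists_penrose_1234 penrose_1234_unique in blast)

lemma mpinv_eqI: "penrose {1,2,3,4} X G \<Longrightarrow> mpinv X = G"
  using penrose_1234_unique mpinv_penrose by blast

lemma ginv_13_mult_right:
  fixes X :: "complex^'n^'m"
  assumes "X ** G ** X = X" "cadj (X ** G) = X ** G"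
  shows "X ** G = X ** mpinv X"
proof -
  let ?D = "mpinv X"
  have D: "X ** ?D ** X = X" "cadj (X ** ?D) = X ** ?D"
    using mpinv_penrose[of X] by (auto simp: penrose_def)
  have "X ** G = cadj (X ** ?D) ** cadj (X ** G)"
    using D assms by (simp add: matrix_mul_assoc)
  also have "\<dots> = cadj (X ** G ** X ** ?D)"
    by (simp add: cadj_mult matrix_mul_assoc)
  finally show ?thesis using assms D by simp
qed

lemma ginv_14_mult_left:
  fixes X :: "complex^'n^'m"
  assumes "X ** G ** X = X" "cadj (G ** X) = G ** X"
  shows "G ** X = mpinv X ** X"
proof -
  let ?D = "mpinv X"
  have D: "X ** ?D ** X = X" "cadj (?D ** X) = ?D ** X"
    using mpinv_penrose[of X] by (auto simp: penrose_def)
  have "G ** X = cadj (G ** X) ** cadj (?D ** X)"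
    by (metis D assms(2) matrix_mul_assoc)
  also have "\<dots> = cadj (?D ** (X ** G ** X))"
    by (simp add: cadj_mult matrix_mul_assoc)
  finally show ?thesis using assms D by simp
qed

lemma ginvs_134_iff:
  fixes X :: "complex^'n^'m"
  shows "G \<in> ginvs {1,3,4} X \<longleftrightarrow> X ** G = X ** mpinv X \<and> G ** X = mpinv X ** X"
proof
  assume "G \<in> ginvs {1,3,4} X"
  thus "X ** G = X ** mpinv X \<and> G ** X = mpinv X ** X"
    using ginv_13_mult_right ginv_14_mult_left by (auto simp: ginvs_def penrose_def)
next
  assume "X ** G = X ** mpinv X \<and> G ** X = mpinv X ** X"
  thus "G \<in> ginvs {1,3,4} X"
    using mpinv_penrose[of X] by (auto simp: ginvs_def penrose_def)
qed

lemma matrix_inv_right: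
  fixes A :: "'a::semiring_1^'n^'n"
  assumes "invertible A"
  shows "A ** matrix_inv A = mat 1"
  using someI_ex[of "\<lambda>A'. A ** A' = mat 1 \<and> A' ** A = mat 1"] assms
  by (simp add: matrix_inv_def invertible_def)

lemma matrix_inv_left:
  fixes A :: "'a::semiring_1^'n^'n"
  assumes "invertible A"
  shows "matrix_inv A ** A = mat 1"
  using someI_ex[of "\<lambda>A'. A ** A' = mat 1 \<and> A' ** A = mat 1"] assms
  by (simp add: matrix_inv_def invertible_def)

lemma similar_mult:
  fixes A :: "'a::comm_semiring_1^'n^'n"
  assumes "invertible A"
  shows "(A ** X ** matrix_inv A) ** (A ** Y ** matrix_inv A) = A ** (X ** Y) ** matrix_inv A"
proof -
  have "(A ** X ** matrix_inv A) ** (A ** Y ** matrix_inv A)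
      = A ** X ** (matrix_inv A ** A) ** Y ** matrix_inv A"
    by (simp add: matrix_mul_assoc)
  thus ?thesis using matrix_inv_left[OF assms] by (simp add: matrix_mul_assoc)
qed

lemma unsimilar_similar:
  fixes A :: "'a::comm_semiring_1^'n^'n"
  assumes "invertible A"
  shows "matrix_inv A ** (A ** X ** matrix_inv A) ** A = X"
proof -
  have "matrix_inv A ** (A ** X ** matrix_inv A) ** A = (matrix_inv A ** A) ** X ** (matrix_inv A ** A)"
    by (simp add: matrix_mul_assoc)
  thus ?thesis using matrix_inv_left[OF assms] by simp
qed

lemma similar_unsimilar:
  fixes A :: "'a::comm_semiring_1^'n^'n"
  assumes "invertible A"
  shows "A ** (matrix_inv A ** H ** A) ** matrix_inv A = H"
proof -
  have "A ** (matrix_inv A ** H ** A) ** matrix_inv A = (A ** matrix_inv A) ** H ** (A ** matrix_inv A)"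
    by (simp add: matrix_mul_assoc)
  thus ?thesis using matrix_inv_right[OF assms] by simp
qed

lemma mult_cancel_invertible:
  fixes U V :: "'a::comm_semiring_1^'n^'n"
  assumes "U' ** U = mat 1" "V ** V' = mat 1"
  shows "U ** X ** V = U ** Y ** V \<longleftrightarrow> X = Y"
proof -
  have "U' ** (U ** Z ** V) ** V' = Z" for Z
    using assms by (simp add: matrix_mul_assoc, simp flip: matrix_mul_assoc)
  thus ?thesis by metis
qed

lemma similar_eq_iff:
  fixes A :: "'a::comm_semiring_1^'n^'n"
  assumes "invertible A"
  shows "A ** X ** matrix_inv A = A ** Y ** matrix_inv A \<longleftrightarrow> X = Y"
  using mult_cancel_invertible matrix_inv_left[OF assms] matrix_inv_right[OF assms] by blast

lemma image_similar_Collect: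
  fixes A :: "'a::comm_semiring_1^'n^'n"
  assumes "invertible A"
  shows "(\<lambda>G. A ** G ** matrix_inv A) ` {G. P G} = {H. P (matrix_inv A ** H ** A)}"
  using unsimilar_similar[OF assms] similar_unsimilar[OF assms] by (auto intro!: image_eqI)

section \<open>Similarity and column spaces\<close>

lemma invertible_cadj:
  fixes A :: "complex^'n^'n"
  assumes "invertible A"
  shows "cadj (matrix_inv A) ** cadj A = mat 1" "cadj A ** cadj (matrix_inv A) = mat 1"
  using matrix_inv_right[OF assms] matrix_inv_left[OF assms] by (metis cadj_mat_1 cadj_mult)+

lemma hermitian_similar_iff_commute:
  fixes A X :: "complex^'m^'m"
  assumes A: "invertible A" and X: "cadj X = X"
  shows "cadj (A ** X ** matrix_inv A) = A ** X ** matrix_inv A \<longleftrightarrow>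
    (cadj A ** A) ** X = X ** (cadj A ** A)"
proof -
  let ?W = "matrix_inv A"
  have "cadj A ** cadj (A ** X ** ?W) ** A = (cadj A ** cadj ?W) ** X ** (cadj A ** A)"
    using X by (simp add: cadj_mult matrix_mul_assoc)
  hence lhs: "cadj A ** cadj (A ** X ** ?W) ** A = X ** (cadj A ** A)"
    using invertible_cadj(2)[OF A] by simp
  have "cadj A ** (A ** X ** ?W) ** A = (cadj A ** A) ** X ** (?W ** A)"
    by (simp add: matrix_mul_assoc)
  hence rhs: "cadj A ** (A ** X ** ?W) ** A = (cadj A ** A) ** X"
    using matrix_inv_left[OF A] by simp
  show ?thesis
    using mult_cancel_invertible[OF invertible_cadj(1)[OF A] matrix_inv_right[OF A]] lhs rhs
    by metis
qed

lemma colspace_mult_subset: "colspace (X ** Y) \<subseteq> colspace X"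
  by (auto simp: colspace_def simp flip: matrix_vector_mul_assoc)

lemma projector_mult_colspace:
  assumes "P ** Y = Y" "colspace X \<subseteq> colspace Y"
  shows "P ** X = X"
proof -
  have "(P ** X) *v v = X *v v" for v
  proof -
    obtain u where "X *v v = Y *v u"
      using assms(2) by (auto simp: colspace_def)
    thus ?thesis using assms(1) by (metis matrix_vector_mul_assoc)
  qed
  thus ?thesis by (simp add: matrix_eq)
qed

text \<open>The hypotheses on \<open>P\<close> make it the orthogonal projector onto the column space of \<open>Y\<close>.\<close>
lemma colspace_mult_eq_iff_commute:
  fixes N P :: "complex^'m^'m" and Y :: "complex^'k^'m" and Z :: "complex^'m^'k"
  assumes N: "invertible N" "cadj N = N"
    and P: "cadj P = P" "P = Y ** Z" "P ** Y = Y"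
  shows "colspace (N ** Y) = colspace Y \<longleftrightarrow> N ** P = P ** N"
proof
  assume "colspace (N ** Y) = colspace Y"
  hence NY: "P ** (N ** Y) = N ** Y"
    using projector_mult_colspace[OF P(3), of "N ** Y"] by simp
  have NP: "N ** P = P ** N ** P"
    using NY P(2) by (metis matrix_mul_assoc)
  have "P ** N = cadj (N ** P)" using N(2) P(1) by (simp add: cadj_mult)
  also have "\<dots> = cadj (P ** N ** P)" using NP by simp
  also have "\<dots> = P ** N ** P" using N(2) P(1) by (simp add: cadj_mult matrix_mul_assoc)
  finally show "N ** P = P ** N" using NP by simp
next
  assume comm: "N ** P = P ** N"
  let ?Ni = "matrix_inv N"
  have comm_inv: "?Ni ** P = P ** ?Ni"
    using comm matrix_inv_left[OF N(1)] matrix_inv_right[OF N(1)]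
    by (metis matrix_mul_assoc matrix_mul_lid matrix_mul_rid)
  have "N ** Y = Y ** (Z ** N ** Y)"
    using comm P(2,3) by (metis matrix_mul_assoc)
  moreover have "Y = (N ** Y) ** (Z ** ?Ni ** Y)"
    using comm_inv P(2,3) matrix_inv_right[OF N(1)] by (metis matrix_mul_assoc matrix_mul_lid)
  ultimately show "colspace (N ** Y) = colspace Y"
    using colspace_mult_subset by (metis subset_antisym)
qed

lemma hermitian_similar_iff_colspace:
  fixes A P :: "complex^'m^'m" and Y :: "complex^'k^'m" and Z :: "complex^'m^'k"
  assumes A: "invertible A" and P: "cadj P = P" "P = Y ** Z" "P ** Y = Y"
  shows "cadj (A ** P ** matrix_inv A) = A ** P ** matrix_inv A \<longleftrightarrow>
    colspace (cadj A ** A ** Y) = colspace Y"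
proof -
  have "invertible (cadj A ** A)"
    using invertible_mult invertible_cadj[OF A] A invertible_left_inverse by blast
  moreover have "cadj (cadj A ** A) = cadj A ** A" by (simp add: cadj_mult)
  ultimately show ?thesis
    using hermitian_similar_iff_commute[OF A P(1)] colspace_mult_eq_iff_commute P by blast
qed

section \<open>Generalized inverses of a similar matrix\<close>

lemma image_similar_ginvs_134:
  fixes A B :: "complex^'m^'m"
  assumes A: "invertible A"
  shows "(\<lambda>G. A ** G ** matrix_inv A) ` ginvs {1,3,4} B =
    {H. (A ** B ** matrix_inv A) ** H = A ** (B ** mpinv B) ** matrix_inv A \<and>
        H ** (A ** B ** matrix_inv A) = A ** (mpinv B ** B) ** matrix_inv A}"
proof -
  have "ginvs {1,3,4} B = {G. B ** G = B ** mpinv B \<and> G ** B = mpinv B ** B}"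
    using ginvs_134_iff by blast
  moreover have "(A ** B ** matrix_inv A) ** H = A ** (B ** (matrix_inv A ** H ** A)) ** matrix_inv A"
    "H ** (A ** B ** matrix_inv A) = A ** ((matrix_inv A ** H ** A) ** B) ** matrix_inv A" for H
    using similar_mult[OF A] similar_unsimilar[OF A] by metis+
  ultimately show ?thesis
    by (simp add: image_similar_Collect[OF A] similar_eq_iff[OF A])
qed

lemma mpinv_similar_eq_iff:
  fixes A B :: "complex^'m^'m"
  assumes A: "invertible A"
  defines "M \<equiv> A ** B ** matrix_inv A"
  shows "mpinv M = A ** mpinv B ** matrix_inv A \<longleftrightarrow>
    M ** mpinv M = A ** (B ** mpinv B) ** matrix_inv A \<and>
    mpinv M ** M = A ** (mpinv B ** B) ** matrix_inv A"
proof
  show "M ** mpinv M = A ** (B ** mpinv B) ** matrix_inv A \<and>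
    mpinv M ** M = A ** (mpinv B ** B) ** matrix_inv A"
    if "mpinv M = A ** mpinv B ** matrix_inv A"
    using that similar_mult[OF A] by (simp add: M_def)
next
  let ?K = "A ** mpinv B ** matrix_inv A"
  assume "M ** mpinv M = A ** (B ** mpinv B) ** matrix_inv A \<and>
    mpinv M ** M = A ** (mpinv B ** B) ** matrix_inv A"
  hence "?K \<in> ginvs {1,3,4} M"
    unfolding ginvs_134_iff M_def similar_mult[OF A] by simp
  moreover have "?K ** M ** ?K = ?K"
    using mpinv_penrose[of B] similar_mult[OF A] by (simp add: M_def penrose_def)
  ultimately show "mpinv M = ?K"
    by (intro mpinv_eqI) (auto simp: ginvs_def penrose_def)
qed

lemma mult_mpinv_similar_iff_colspace:
  fixes A B :: "complex^'m^'m"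
  assumes A: "invertible A"
  defines "M \<equiv> A ** B ** matrix_inv A"
  shows "M ** mpinv M = A ** (B ** mpinv B) ** matrix_inv A \<longleftrightarrow>
    colspace (cadj A ** A ** B) = colspace B"
proof -
  let ?K = "A ** mpinv B ** matrix_inv A" and ?P = "B ** mpinv B"
  have B: "B ** mpinv B ** B = B" "cadj ?P = ?P"
    using mpinv_penrose[of B] by (auto simp: penrose_def)
  have MK: "M ** ?K = A ** ?P ** matrix_inv A" "M ** ?K ** M = M"
    using similar_mult[OF A] B(1) by (simp_all add: M_def)
  have "M ** mpinv M = M ** ?K \<longleftrightarrow> cadj (M ** ?K) = M ** ?K"
    using mpinv_penrose[of M] ginv_13_mult_right[OF MK(2)] by (auto simp: penrose_def)
  thus ?thesis
    using hermitian_similar_iff_colspace[OF A B(2) refl] B(1) MK(1) by (simp add: matrix_mul_assoc)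
qed

lemma mpinv_mult_similar_iff_colspace:
  fixes A B :: "complex^'m^'m"
  assumes A: "invertible A"
  defines "M \<equiv> A ** B ** matrix_inv A"
  shows "mpinv M ** M = A ** (mpinv B ** B) ** matrix_inv A \<longleftrightarrow>
    colspace (cadj A ** A ** cadj B) = colspace (cadj B)"
proof -
  let ?K = "A ** mpinv B ** matrix_inv A" and ?Q = "mpinv B ** B"
  have B: "B ** mpinv B ** B = B" "cadj ?Q = ?Q"
    using mpinv_penrose[of B] by (auto simp: penrose_def)
  have Q: "?Q = cadj B ** cadj (mpinv B)" "?Q ** cadj B = cadj B"
    using B by (metis cadj_mult matrix_mul_assoc)+
  have KM: "?K ** M = A ** ?Q ** matrix_inv A" "M ** ?K ** M = M"
    using similar_mult[OF A] B(1) by (simp_all add: M_def)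
  have "mpinv M ** M = ?K ** M \<longleftrightarrow> cadj (?K ** M) = ?K ** M"
    using mpinv_penrose[of M] ginv_14_mult_left[OF KM(2)] by (auto simp: penrose_def)
  thus ?thesis
    using hermitian_similar_iff_colspace[OF A B(2) Q] KM(1) by simp
qed

section \<open>Unitary similarity\<close>

lemma unitary_invertible:
  fixes A :: "complex^'m^'m"
  assumes "cadj A ** A = mat 1"
  shows "invertible A"
  using assms invertible_left_inverse by blast

lemma unitary_matrix_inv:
  fixes A :: "complex^'m^'m"
  assumes "cadj A ** A = mat 1"
  shows "matrix_inv A = cadj A"
proof -
  have "matrix_inv A = (cadj A ** A) ** matrix_inv A" using assms by simp
  also have "\<dots> = cadj A"
    using matrix_inv_right[OF unitary_invertible[OF assms]] by (simp flip: matrix_mul_assoc)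
  finally show ?thesis .
qed

lemma penrose_unitary_similar_iff:
  fixes A B G :: "complex^'m^'m"
  assumes U: "cadj A ** A = mat 1"
  shows "penrose S (A ** B ** cadj A) (A ** G ** cadj A) \<longleftrightarrow> penrose S B G"
proof -
  note A = unitary_invertible[OF U] and inv = unitary_matrix_inv[OF U, symmetric]
  have "cadj (A ** X ** cadj A) = A ** cadj X ** cadj A" for X :: "complex^'m^'m"
    by (simp add: cadj_mult matrix_mul_assoc)
  thus ?thesis
    unfolding penrose_def inv similar_mult[OF A] by (simp add: similar_eq_iff[OF A])
qed

lemma ginvs_unitary_similar:
  fixes A B :: "complex^'m^'m"
  assumes U: "cadj A ** A = mat 1"
  shows "ginvs S (A ** B ** cadj A) = (\<lambda>G. A ** G ** cadj A) ` ginvs S B"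
proof -
  note A = unitary_invertible[OF U] and inv = unitary_matrix_inv[OF U, symmetric]
  show ?thesis
    unfolding ginvs_def inv image_similar_Collect[OF A]
    using penrose_unitary_similar_iff[OF U] similar_unsimilar[OF A] by (metis inv)
qed

lemma mpinv_unitary_similar:
  fixes A B :: "complex^'m^'m"
  assumes "cadj A ** A = mat 1"
  shows "mpinv (A ** B ** cadj A) = A ** mpinv B ** cadj A"
  by (rule mpinv_eqI) (unfold penrose_unitary_similar_iff[OF assms], rule mpinv_penrose)

theorem corollary4p3:
  fixes A B :: "complex^'m^'m"
  assumes "invertible A"
  defines "M \<equiv> A ** B ** matrix_inv A"
  shows
   "(let P1 = (ginvs {1,3,4} M \<inter> (\<lambda>G. A ** G ** matrix_inv A) ` ginvs {1,3,4} B \<noteq> {});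
         P2 = (ginvs {1,3,4} M = (\<lambda>G. A ** G ** matrix_inv A) ` ginvs {1,3,4} B);
         P3 = (A ** mpinv B ** matrix_inv A \<in> ginvs {1,3,4} M);
         P4 = (mpinv M \<in> (\<lambda>G. A ** G ** matrix_inv A) ` ginvs {1,3,4} B);
         P5 = (mpinv M = A ** mpinv B ** matrix_inv A);
         P6 = (colspace (cadj A ** A ** B) = colspace B \<and>
               colspace (cadj A ** A ** cadj B) = colspace (cadj B))
     in (P1 \<longleftrightarrow> P2) \<and> (P1 \<longleftrightarrow> P3) \<and> (P1 \<longleftrightarrow> P4) \<and> (P1 \<longleftrightarrow> P5) \<and> (P1 \<longleftrightarrow> P6))
    \<and> (cadj A ** A = mat 1 \<longrightarrow>
        (\<forall>\<tau> \<in> {{1}, {1,2}, {1,3}, {1,4}, {1,2,3}, {1,2,4}, {1,3,4}}.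
            ginvs \<tau> (A ** B ** cadj A) = (\<lambda>G. A ** G ** cadj A) ` ginvs \<tau> B)
        \<and> mpinv (A ** B ** cadj A) = A ** mpinv B ** cadj A)"
proof -
  let ?K = "A ** mpinv B ** matrix_inv A"
  let ?p = "A ** (B ** mpinv B) ** matrix_inv A" and ?q = "A ** (mpinv B ** B) ** matrix_inv A"
  let ?S = "ginvs {1,3,4} M" and ?T = "(\<lambda>G. A ** G ** matrix_inv A) ` ginvs {1,3,4} B"
  define C where "C \<longleftrightarrow> M ** mpinv M = ?p \<and> mpinv M ** M = ?q"
  have S: "?S = {H. M ** H = M ** mpinv M \<and> H ** M = mpinv M ** M}"
    using ginvs_134_iff by blast
  have T: "?T = {H. M ** H = ?p \<and> H ** M = ?q}"
    unfolding M_def by (rule image_similar_ginvs_134[OF assms(1)])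
  have K: "M ** ?K = ?p" "?K ** M = ?q"
    using similar_mult[OF assms(1)] by (simp_all add: M_def)
  have P1: "?S \<inter> ?T \<noteq> {} \<longleftrightarrow> C" and P2: "?S = ?T \<longleftrightarrow> C"
    and P3: "?K \<in> ?S \<longleftrightarrow> C" and P4: "mpinv M \<in> ?T \<longleftrightarrow> C"
    unfolding S T C_def using K by auto
  have P5: "mpinv M = ?K \<longleftrightarrow> C"
    unfolding C_def M_def by (rule mpinv_similar_eq_iff[OF assms(1)])
  have P6: "colspace (cadj A ** A ** B) = colspace B \<and>
      colspace (cadj A ** A ** cadj B) = colspace (cadj B) \<longleftrightarrow> C"
    unfolding C_def M_def
    using mult_mpinv_similar_iff_colspace[OF assms(1)] mpinv_mult_similar_iff_colspace[OF assms(1)] by simp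
  show ?thesis
    unfolding Let_def P1 P2 P3 P4 P5 P6
    using ginvs_unitary_similar mpinv_unitary_similar by blast
qed

end
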